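(* Let $\mathbb{K}$ be a perfect field, $\mathbf{u}_1,\dots,\mathbf{u}_t\in\mathbb{K}^{\mathbb{N}^n}$ with $J=\mathrm{ann}(\mathbf{u}_1,\dots,\mathbf{u}_t)$ zero-dimensional, and $B$ an integer such that for every $j$ the minimal polynomial of $X_j$ in $\mathbb{K}[X_1,\dots,X_n]/J$ has degree at most $B$. Fix $j\in\{1,\dots,n\}$ and a sequence of monomials $\mathscr{B}'_{j+1}$ in $\mathbb{K}[X_{j+1},\dots,X_n]$ (with $\mathscr{B}'_{n+1}=(1)$ if $j=n$) of cardinality at most $D_{j+1}$. Let $\mathscr{C}_{j+1}=\{b'X_j^k : b'\in\mathscr{B}'_{j+1},\ 0\le k\le B-1\}$, and let $\mathsf{M}$ be the matrix with rows indexed by pairs $(i,b')$, $1\le i\le t$, $b'\in\mathscr{C}_{j+1}$, columns indexed by $b\in\mathscr{C}_{j+1}$ sorted increasingly for the lexicographic order $X_j>\cdots>X_n$, and entries $\langle\mathbf{u}_i\mid bb'\rangle$. Let $\mathscr{B}'_j=(b'_1<\cdots<b'_{D'_j})$ be the monomials indexing the pivot columns of the reduced row echelon form of $\mathsf{M}$. Then $D'_j\le D_j$; and if $j\le n-1$, $\mathscr{B}'_{j+1}=\mathscr{B}_{j+1}$ and $J_j\cap\mathbb{K}[X_{j+1},\dots,X_n]=J_{j+1}$, then $\mathscr{B}'_j=\mathscr{B}_j$.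
   Context: For $m\in\mathbb{N}^n$, $\mathbf{X}^m=X_1^{m_1}\cdots X_n^{m_n}$; for a sequence $\mathbf{u}=(u_m)_m$ and $f=\sum_mf_m\mathbf{X}^m$, $\langle\mathbf{u}\mid f\rangle=\sum_mf_mu_m$, $f\cdot\mathbf{u}=(\langle\mathbf{u}\mid\mathbf{X}^mf\rangle)_m$, $\mathrm{ann}(\mathbf{u})$ is the ideal of $f$ with $f\cdot\mathbf{u}=0$, and $\mathrm{ann}$ of several sequences is the intersection. $\pi_j(\mathbf{u}_i)$ is the sequence indexed by $\mathbb{N}^{n-j+1}$ with $\langle\pi_j(\mathbf{u}_i)\mid(m_j,\dots,m_n)\rangle=\langle\mathbf{u}_i\mid(0,\dots,0,m_j,\dots,m_n)\rangle$; $J_j=\mathrm{ann}(\pi_j(\mathbf{u}_1),\dots,\pi_j(\mathbf{u}_t))\subset\mathbb{K}[X_j,\dots,X_n]$, $D_j=\dim_{\mathbb{K}}\mathbb{K}[X_j,\dots,X_n]/J_j$, and $\mathscr{B}_j$ is the monomial basis (standard monomials) of $\mathbb{K}[X_j,\dots,X_n]/J_j$ for the lexicographic order $X_j>\cdots>X_n$. *)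

theory Defs
  imports "Jordan_Normal_Form.Gauss_Jordan_Elimination" "HOL-Computational_Algebra.Polynomial"
begin

(* Monomials X^m are exponent functions m :: nat => nat; variable X_i is index i.
   Polynomials are finitely supported coefficient functions on monomials;
   sequences are functions from monomials to the field. *)

type_synonym mono = "nat \<Rightarrow> nat"

definition perfect_field :: "'a::field itself \<Rightarrow> bool" where
  "perfect_field T \<longleftrightarrow> CHAR('a) = 0 \<or> (\<forall>y::'a. \<exists>x. x ^ CHAR('a) = y)"

definition monoms :: "nat set \<Rightarrow> mono set" where
  "monoms V = {m. \<forall>i. m i \<noteq> 0 \<longrightarrow> i \<in> V}"

definition polys :: "nat set \<Rightarrow> (mono \<Rightarrow> 'a::zero) set" where
  "polys V = {f. finite {m. f m \<noteq> 0} \<and> (\<forall>m. f m \<noteq> 0 \<longrightarrow> m \<in> monoms V)}"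

definition mmul :: "mono \<Rightarrow> mono \<Rightarrow> mono" where
  "mmul m m' = (\<lambda>i. m i + m' i)"

definition mtimes :: "mono \<Rightarrow> (mono \<Rightarrow> 'a::zero) \<Rightarrow> (mono \<Rightarrow> 'a)" where
  "mtimes m f = (\<lambda>k. if (\<forall>i. m i \<le> k i) then f (\<lambda>i. k i - m i) else 0)"

definition pair :: "(mono \<Rightarrow> 'a::comm_ring_1) \<Rightarrow> (mono \<Rightarrow> 'a) \<Rightarrow> 'a" where
  "pair u f = (\<Sum>m\<in>{m. f m \<noteq> 0}. f m * u m)"

definition act :: "nat set \<Rightarrow> (mono \<Rightarrow> 'a::comm_ring_1) \<Rightarrow> (mono \<Rightarrow> 'a) \<Rightarrow> (mono \<Rightarrow> 'a)" where
  "act V f u = (\<lambda>m. if m \<in> monoms V then pair u (mtimes m f) else 0)"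

definition ann :: "nat set \<Rightarrow> (mono \<Rightarrow> 'a::comm_ring_1) set \<Rightarrow> (mono \<Rightarrow> 'a) set" where
  "ann V S = {f \<in> polys V. \<forall>u\<in>S. act V f u = (\<lambda>_. 0)}"

definition proj :: "nat \<Rightarrow> nat \<Rightarrow> (mono \<Rightarrow> 'a) \<Rightarrow> (mono \<Rightarrow> 'a)" where
  "proj j n u = (\<lambda>m. u (\<lambda>i. if j \<le> i \<and> i \<le> n then m i else 0))"

definition Jj :: "nat \<Rightarrow> nat \<Rightarrow> (nat \<Rightarrow> mono \<Rightarrow> 'a::comm_ring_1) \<Rightarrow> nat \<Rightarrow> (mono \<Rightarrow> 'a) set" where
  "Jj n t u j = ann {j..n} ((\<lambda>i. proj j n (u i)) ` {1..t})"

definition lincomb :: "(mono \<Rightarrow> 'a::comm_ring_1) set \<Rightarrow> ((mono \<Rightarrow> 'a) \<Rightarrow> 'a) \<Rightarrow> (mono \<Rightarrow> 'a)" where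
  "lincomb S c = (\<lambda>m. \<Sum>s\<in>S. c s * s m)"

definition lin_indep_mod :: "(mono \<Rightarrow> 'a::comm_ring_1) set \<Rightarrow> (mono \<Rightarrow> 'a) set \<Rightarrow> bool" where
  "lin_indep_mod I S \<longleftrightarrow> (\<forall>c. lincomb S c \<in> I \<longrightarrow> (\<forall>s\<in>S. c s = 0))"

definition indep_cards :: "nat set \<Rightarrow> (mono \<Rightarrow> 'a::comm_ring_1) set \<Rightarrow> nat set" where
  "indep_cards V I = {card S | S. finite S \<and> S \<subseteq> polys V \<and> lin_indep_mod I S}"

definition quot_dim :: "nat set \<Rightarrow> (mono \<Rightarrow> 'a::comm_ring_1) set \<Rightarrow> nat" where
  "quot_dim V I = Sup (indep_cards V I)"

definition zero_dimensional :: "nat set \<Rightarrow> (mono \<Rightarrow> 'a::comm_ring_1) set \<Rightarrow> bool" where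
  "zero_dimensional V I \<longleftrightarrow> bdd_above (indep_cards V I)"

(* lexicographic order with X_1 > X_2 > ... (smaller index = bigger variable) *)
definition lex_less :: "mono \<Rightarrow> mono \<Rightarrow> bool" where
  "lex_less m m' \<longleftrightarrow> (\<exists>k. (\<forall>i<k. m i = m' i) \<and> m k < m' k)"

definition is_lm :: "(mono \<Rightarrow> 'a::zero) \<Rightarrow> mono \<Rightarrow> bool" where
  "is_lm f m \<longleftrightarrow> f m \<noteq> 0 \<and> (\<forall>m'. f m' \<noteq> 0 \<and> m' \<noteq> m \<longrightarrow> lex_less m' m)"

definition std_monos :: "nat set \<Rightarrow> (mono \<Rightarrow> 'a::zero) set \<Rightarrow> mono set" where
  "std_monos V I = {m \<in> monoms V. \<not> (\<exists>f\<in>I. is_lm f m)}"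

definition var_mono :: "nat \<Rightarrow> nat \<Rightarrow> mono" where
  "var_mono j k = (\<lambda>i. if i = j then k else 0)"

definition poly_in_var :: "nat \<Rightarrow> 'a::zero poly \<Rightarrow> (mono \<Rightarrow> 'a)" where
  "poly_in_var j p = (\<lambda>m. if m = var_mono j (m j) then coeff p (m j) else 0)"

definition is_min_poly :: "(mono \<Rightarrow> 'a::field) set \<Rightarrow> nat \<Rightarrow> 'a poly \<Rightarrow> bool" where
  "is_min_poly I j p \<longleftrightarrow> lead_coeff p = 1 \<and> poly_in_var j p \<in> I \<and>
     (\<forall>q. poly_in_var j q \<in> I \<longrightarrow> p dvd q)"

definition Cset :: "nat \<Rightarrow> nat \<Rightarrow> mono set \<Rightarrow> mono set" where
  "Cset j B Bp = {mmul b' (var_mono j k) | b' k. b' \<in> Bp \<and> k < B}"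

definition sorted_lex :: "mono set \<Rightarrow> mono list" where
  "sorted_lex C = (THE xs. sorted_wrt lex_less xs \<and> set xs = C)"

(* some enumeration of the row indices (the pivot columns do not depend on the row order) *)
definition row_list :: "nat \<Rightarrow> mono set \<Rightarrow> (nat \<times> mono) list" where
  "row_list t C = (SOME xs. distinct xs \<and> set xs = {1..t} \<times> C)"

definition Mmat :: "nat \<Rightarrow> (nat \<Rightarrow> mono \<Rightarrow> 'a) \<Rightarrow> mono set \<Rightarrow> 'a mat" where
  "Mmat t u C = (let rs = row_list t C; cs = sorted_lex C in
     mat (length rs) (length cs) (\<lambda>(r, c). case rs ! r of (i, b') \<Rightarrow> u i (mmul (cs ! c) b')))"

definition pivot_cols :: "'a::zero mat \<Rightarrow> nat set" where
  "pivot_cols R = {c. c < dim_col R \<and> (\<exists>r < dim_row R. R $$ (r, c) \<noteq> 0 \<and> (\<forall>c' < c. R $$ (r, c') = 0))}"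

definition Bprime :: "nat \<Rightarrow> nat \<Rightarrow> nat \<Rightarrow> (nat \<Rightarrow> mono \<Rightarrow> 'a::field) \<Rightarrow> mono set \<Rightarrow> mono set" where
  "Bprime t B j u Bp = (let C = Cset j B Bp in
     (\<lambda>c. sorted_lex C ! c) ` pivot_cols (gauss_jordan_single (Mmat t u C)))"

end

theory Submission
  imports Defs "HOL-Library.Function_Algebras"
begin

text \<open>
  Write \<open>col b\<close> for the column of \<open>M\<close> indexed by \<open>b\<close>, which makes sense for every monomial
  \<open>b\<close> in \<open>X\<^sub>j, \<dots>, X\<^sub>n\<close>. The pivot columns of the reduced row echelon form are those not
  spanned by the columns to their left, so \<open>B'\<^sub>j\<close> consists of the \<open>b \<in> C\<^sub>j\<^sub>+\<^sub>1\<close> whose column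
  is not spanned by the columns of the lexicographically smaller elements of \<open>C\<^sub>j\<^sub>+\<^sub>1\<close>.

  Every \<open>g \<in> J\<^sub>j\<close> gives the relation \<open>\<Sum>\<^sub>k g\<^sub>k col k = 0\<close>, in which the column of the leading
  monomial depends on smaller ones. Hence the elements of \<open>B'\<^sub>j\<close> are linearly independent
  modulo \<open>J\<^sub>j\<close>, and \<open>D'\<^sub>j \<le> D\<^sub>j\<close>.

  Reducing by leading monomials of \<open>J\<^sub>j\<close> (well-founded induction along the lexicographic
  order) writes every \<open>col m\<close> as a combination of columns of standard monomials \<open>\<le> m\<close>. So if
  \<open>C\<^sub>j\<^sub>+\<^sub>1\<close> contains all standard monomials of \<open>J\<^sub>j\<close>, the rows indexed by \<open>C\<^sub>j\<^sub>+\<^sub>1\<close> determine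
  all the others, a dependency among columns of \<open>C\<^sub>j\<^sub>+\<^sub>1\<close> is an element of \<open>J\<^sub>j\<close>, and the
  pivots are exactly the standard monomials. Under the hypotheses of the second claim
  \<open>C\<^sub>j\<^sub>+\<^sub>1\<close> does contain them: removing \<open>X\<^sub>j\<close> from a standard monomial of \<open>J\<^sub>j\<close> leaves a
  standard monomial of \<open>J\<^sub>j\<^sub>+\<^sub>1 \<subseteq> J\<^sub>j\<close>, and its degree in \<open>X\<^sub>j\<close> is below the degree of the
  minimal polynomial of \<open>X\<^sub>j\<close>, which is at most \<open>B\<close>.
\<close>

section \<open>Lexicographic order and monomials\<close>

lemma lex_less_irrefl: "\<not> lex_less m m"
  unfolding lex_less_def by auto

lemma lex_less_trans: "lex_less a b \<Longrightarrow> lex_less b c \<Longrightarrow> lex_less a c"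
  unfolding lex_less_def
proof (elim exE conjE)
  fix k1 k2
  assume h1: "\<forall>i<k1. a i = b i" "a k1 < b k1" and h2: "\<forall>i<k2. b i = c i" "b k2 < c k2"
  show "\<exists>k. (\<forall>i<k. a i = c i) \<and> a k < c k"
  proof (cases "k1 \<le> k2")
    case True
    then show ?thesis using h1 h2 by (intro exI[of _ k1]) (auto simp: le_less)
  next
    case False
    then show ?thesis using h1 h2 by (intro exI[of _ k2]) auto
  qed
qed

lemma lex_less_asym: "lex_less a b \<Longrightarrow> \<not> lex_less b a"
  using lex_less_trans lex_less_irrefl by blast

lemma lex_less_linear: "m \<noteq> m' \<Longrightarrow> lex_less m m' \<or> lex_less m' m"
proof -
  assume "m \<noteq> m'"
  then have ex: "\<exists>i. m i \<noteq> m' i" by auto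
  define k where "k = (LEAST i. m i \<noteq> m' i)"
  have k1: "m k \<noteq> m' k" unfolding k_def using LeastI_ex[OF ex] .
  have k2: "\<forall>i<k. m i = m' i" unfolding k_def using not_less_Least by blast
  show ?thesis
  proof (cases "m k < m' k")
    case True
    then show ?thesis using k2 unfolding lex_less_def by blast
  next
    case False
    then have "m' k < m k" using k1 by auto
    then show ?thesis using k2 unfolding lex_less_def by (intro disjI2 exI[of _ k]) auto
  qed
qed

lemma lex_less_mmul: "lex_less a b \<Longrightarrow> lex_less (mmul m a) (mmul m b)"
  unfolding lex_less_def mmul_def by auto

lemma lex_less_imp_lex_map:
  assumes "lex_less a b" "\<forall>i. b i \<noteq> 0 \<longrightarrow> i < N"
  shows "(map a [0..<N], map b [0..<N]) \<in> lex {(x, y). x < y}"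
proof -
  obtain k where k: "\<forall>i<k. a i = b i" "a k < b k" using assms(1) unfolding lex_less_def by auto
  have "k < N" using assms(2) k(2) by (metis less_nat_zero_code)
  then have split: "[0..<N] = [0..<k] @ k # [Suc k..<N]"
    using upt_add_eq_append[of 0 k "N - k"] upt_conv_Cons[of k N] by simp
  have "map b [0..<k] = map a [0..<k]" using k(1) by auto
  then show ?thesis unfolding lex_conv split using k(2)
    by (intro CollectI case_prodI conjI exI[of _ "map a [0..<k]"] exI[of _ "a k"] exI[of _ "b k"]
        exI[of _ "map a [Suc k..<N]"] exI[of _ "map b [Suc k..<N]"]) auto
qed

text \<open>Bounded support is needed: \<open>X\<^sub>1 > X\<^sub>2 > X\<^sub>3 > \<dots>\<close> is an infinite descending chain.\<close>

lemma wf_lex_less_monoms: "wf {(a, b). lex_less a b \<and> b \<in> monoms {..N}}"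
proof (rule wf_subset)
  show "wf (inv_image (lex {(x::nat, y). x < y}) (\<lambda>m. map m [0..<Suc N]))"
    by (intro wf_inv_image wf_lex) (simp add: wf_less)
  show "{(a, b). lex_less a b \<and> b \<in> monoms {..N}}
      \<subseteq> inv_image (lex {(x, y). x < y}) (\<lambda>m. map m [0..<Suc N])"
    by (auto simp: monoms_def less_Suc_eq_le simp del: upt_Suc intro!: lex_less_imp_lex_map)
qed

lemma ex_lex_greatest:
  "finite N \<Longrightarrow> N \<noteq> {} \<Longrightarrow> \<exists>b0\<in>N. \<forall>b\<in>N. b \<noteq> b0 \<longrightarrow> lex_less b b0"
proof (induction rule: finite_ne_induct)
  case (insert x F)
  then obtain b0 where b0: "b0 \<in> F" "\<forall>b\<in>F. b \<noteq> b0 \<longrightarrow> lex_less b b0" by auto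
  have "x \<noteq> b0" using insert(3) b0(1) by auto
  then consider "lex_less x b0" | "lex_less b0 x" using lex_less_linear by blast
  then show ?case
  proof cases
    case 1
    then show ?thesis using b0 by auto
  next
    case 2
    have "lex_less b x" if "b \<in> F" for b
      using b0 2 that lex_less_trans[of b b0 x] by (cases "b = b0") auto
    then show ?thesis by auto
  qed
qed auto

lemma ex_is_lm: "finite {m. f m \<noteq> 0} \<Longrightarrow> f m \<noteq> 0 \<Longrightarrow> \<exists>b. is_lm f b"
  using ex_lex_greatest[of "{m. f m \<noteq> 0}"] unfolding is_lm_def by blast

lemma mmul_commute: "mmul a b = mmul b a"
  unfolding mmul_def by (auto simp: add.commute)

lemma mmul_assoc: "mmul (mmul a b) c = mmul a (mmul b c)"
  unfolding mmul_def by (auto simp: add.assoc)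

lemma inj_mmul: "inj (mmul m)"
  unfolding mmul_def inj_def by (simp add: fun_eq_iff)

lemma mmul_in_monoms: "a \<in> monoms V \<Longrightarrow> b \<in> monoms V \<Longrightarrow> mmul a b \<in> monoms V"
  unfolding mmul_def monoms_def by auto

lemma monoms_mono: "V \<subseteq> V' \<Longrightarrow> monoms V \<subseteq> monoms V'"
  unfolding monoms_def by auto

lemma polys_mono: "V \<subseteq> V' \<Longrightarrow> polys V \<subseteq> polys V'"
  unfolding polys_def using monoms_mono by blast

lemma var_mono_in_monoms: "j \<in> V \<Longrightarrow> var_mono j k \<in> monoms V"
  unfolding var_mono_def monoms_def by auto

lemma mmul_var_mono: "mmul (var_mono j a) (var_mono j b) = var_mono j (a + b)"
  unfolding mmul_def var_mono_def by auto

lemma sorted_lex_exists: "finite C \<Longrightarrow> \<exists>xs. sorted_wrt lex_less xs \<and> set xs = C"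
proof (induction rule: finite_induct)
  case (insert x F)
  then obtain xs where xs: "sorted_wrt lex_less xs" "set xs = F" by auto
  define ys where "ys = filter (\<lambda>y. lex_less y x) xs @ [x] @ filter (lex_less x) xs"
  have "sorted_wrt lex_less ys" unfolding ys_def using xs(1)
    by (auto simp: sorted_wrt_append sorted_wrt_filter intro: lex_less_trans)
  moreover have "set ys = insert x F"
  proof -
    have "y \<in> set ys" if "y \<in> F" for y
      using lex_less_linear[of y x] that insert(2) xs(2) unfolding ys_def by auto
    then show ?thesis unfolding ys_def using xs(2) by auto
  qed
  ultimately show ?case by blast
qed simp

lemma sorted_lex_unique:
  "sorted_wrt lex_less xs \<Longrightarrow> sorted_wrt lex_less ys \<Longrightarrow> set xs = set ys \<Longrightarrow> xs = ys"
proof (induction xs arbitrary: ys)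
  case (Cons x xs)
  then obtain y ys' where ys: "ys = y # ys'" by (cases ys) auto
  have "x = y"
  proof (rule ccontr)
    assume "x \<noteq> y"
    then have "lex_less y x" "lex_less x y" using Cons.prems ys by auto
    then show False using lex_less_asym by blast
  qed
  moreover have "x \<notin> set xs" "y \<notin> set ys'" using Cons.prems ys lex_less_irrefl by auto
  ultimately have "set xs = set ys'" using Cons.prems(3) ys by auto
  then have "xs = ys'" using Cons ys by auto
  then show ?case using ys \<open>x = y\<close> by simp
qed simp

lemma sorted_lex:
  assumes "finite C"
  shows "sorted_wrt lex_less (sorted_lex C)" "set (sorted_lex C) = C"
proof -
  obtain xs where xs: "sorted_wrt lex_less xs" "set xs = C" using sorted_lex_exists[OF assms] by auto
  have "sorted_wrt lex_less (sorted_lex C) \<and> set (sorted_lex C) = C"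
    unfolding sorted_lex_def by (rule theI[of _ xs]) (use xs sorted_lex_unique in auto)
  then show "sorted_wrt lex_less (sorted_lex C)" "set (sorted_lex C) = C" by auto
qed

lemma sorted_lex_nth_less_iff:
  assumes "finite C" "i < length (sorted_lex C)" "k < length (sorted_lex C)"
  shows "lex_less (sorted_lex C ! i) (sorted_lex C ! k) \<longleftrightarrow> i < k"
proof -
  have s: "lex_less (sorted_lex C ! i') (sorted_lex C ! k')"
    if "i' < k'" "k' < length (sorted_lex C)" for i' k'
    using sorted_lex(1)[OF assms(1)] that unfolding sorted_wrt_iff_nth_less by blast
  show ?thesis
  proof
    assume l: "lex_less (sorted_lex C ! i) (sorted_lex C ! k)"
    show "i < k"
    proof (rule ccontr)
      assume "\<not> i < k"
      then consider "k < i" | "k = i" by linarith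
      then show False
        by cases (use s[of k i] assms l lex_less_asym lex_less_irrefl in auto)
    qed
  qed (use s assms in blast)
qed

lemma sorted_lex_prefix:
  assumes C: "finite C" and c: "c < length (sorted_lex C)"
  shows "{m \<in> C. lex_less m (sorted_lex C ! c)} = (\<lambda>k. sorted_lex C ! k) ` {0..<c}"
proof (intro equalityI subsetI)
  fix m assume m: "m \<in> {m \<in> C. lex_less m (sorted_lex C ! c)}"
  then have "m \<in> set (sorted_lex C)" using sorted_lex(2)[OF C] by auto
  then obtain k where k: "k < length (sorted_lex C)" "m = sorted_lex C ! k"
    by (auto simp: in_set_conv_nth)
  then show "m \<in> (\<lambda>k. sorted_lex C ! k) ` {0..<c}"
    using m sorted_lex_nth_less_iff[OF C k(1) c] by auto
next
  fix m assume "m \<in> (\<lambda>k. sorted_lex C ! k) ` {0..<c}"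
  then obtain k where k: "k < c" "m = sorted_lex C ! k" by auto
  then have "m \<in> set (sorted_lex C)" using c by auto
  then show "m \<in> {m \<in> C. lex_less m (sorted_lex C ! c)}"
    using k sorted_lex(2)[OF C] sorted_lex_nth_less_iff[OF C _ c, of k] c by auto
qed

lemma set_row_list: "finite C \<Longrightarrow> set (row_list t C) = {1..t} \<times> C"
  unfolding row_list_def
  by (rule someI2_ex) (use finite_distinct_list[of "{1..t} \<times> C"] in auto)

section \<open>Polynomials, annihilators and the ideals \<open>J\<^sub>j\<close>\<close>

abbreviation supp :: "(mono \<Rightarrow> 'a::zero) \<Rightarrow> mono set" where
  "supp f \<equiv> {k. f k \<noteq> 0}"

lemma mtimes_mmul: "mtimes m f (mmul m k) = f k"
  unfolding mtimes_def mmul_def by simp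

lemma supp_mtimes: "supp (mtimes m f) = mmul m ` supp f"
proof (intro equalityI subsetI)
  fix k assume "k \<in> supp (mtimes m f)"
  then have h: "\<forall>i. m i \<le> k i" "f (\<lambda>i. k i - m i) \<noteq> 0"
    unfolding mtimes_def by (auto split: if_splits)
  have "k = mmul m (\<lambda>i. k i - m i)" using h(1) unfolding mmul_def by (auto simp: fun_eq_iff)
  then show "k \<in> mmul m ` supp f" using h(2) by blast
qed (auto simp: mtimes_mmul)

lemma mtimes_mtimes: "mtimes m' (mtimes m f) = mtimes (mmul m' m) f"
proof (rule ext)
  fix k
  show "mtimes m' (mtimes m f) k = mtimes (mmul m' m) f k"
  proof (cases "\<forall>i. m' i + m i \<le> k i")
    case True
    then have "\<forall>i. m' i \<le> k i" "\<forall>i. m i \<le> k i - m' i"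
      by (metis add_leD1, metis add.commute le_diff_conv2 add_leD1)
    moreover have "(\<lambda>i. k i - m' i - m i) = (\<lambda>i. k i - (m' i + m i))" by auto
    ultimately show ?thesis using True unfolding mtimes_def mmul_def by simp
  next
    case False
    then have "\<not> ((\<forall>i. m' i \<le> k i) \<and> (\<forall>i. m i \<le> k i - m' i))"
      by (auto simp: le_diff_conv2) (metis add.commute le_diff_conv2)
    then show ?thesis using False unfolding mtimes_def mmul_def by auto
  qed
qed

lemma polys_supp_monoms: "f \<in> polys V \<Longrightarrow> f k \<noteq> 0 \<Longrightarrow> k \<in> monoms V"
  unfolding polys_def by auto

lemma mtimes_in_polys:
  assumes f: "f \<in> polys V" and m: "m \<in> monoms V"
  shows "mtimes m f \<in> polys V"
proof -
  have "finite (supp f)" using f unfolding polys_def by blast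
  then have "finite (supp (mtimes m f))" by (simp only: supp_mtimes finite_imageI)
  moreover have "k \<in> monoms V" if "mtimes m f k \<noteq> 0" for k
  proof -
    have "k \<in> mmul m ` supp f" using that supp_mtimes[of m f] by blast
    then obtain k0 where "k = mmul m k0" "f k0 \<noteq> 0" by blast
    then show ?thesis using f m mmul_in_monoms[of m V] unfolding polys_def by blast
  qed
  ultimately show ?thesis unfolding polys_def by blast
qed

lemma lincomb_in_polys:
  assumes "finite S" "S \<subseteq> polys V"
  shows "lincomb S c \<in> polys V"
proof -
  have sub: "supp (lincomb S c) \<subseteq> (\<Union>s\<in>S. supp s)"
  proof
    fix m assume "m \<in> supp (lincomb S c)"
    then have "(\<Sum>s\<in>S. c s * s m) \<noteq> 0" unfolding lincomb_def by simp
    then obtain s where s: "s \<in> S" "c s * s m \<noteq> 0" by (meson sum.neutral)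
    then have "s m \<noteq> 0" by auto
    then show "m \<in> (\<Union>s\<in>S. supp s)" using s(1) by blast
  qed
  have "finite (\<Union>s\<in>S. supp s)" using assms unfolding polys_def by auto
  then show ?thesis
    using sub assms(2) finite_subset unfolding polys_def by blast
qed

lemma pair_mtimes: "pair U (mtimes m f) = (\<Sum>k\<in>supp f. f k * U (mmul m k))"
  unfolding pair_def supp_mtimes
  by (subst sum.reindex) (auto intro: inj_on_subset[OF inj_mmul] simp: mtimes_mmul)

lemma act_eq_0_iff:
  "act V f U = (\<lambda>_. 0) \<longleftrightarrow> (\<forall>m\<in>monoms V. (\<Sum>k\<in>supp f. f k * U (mmul m k)) = 0)"
  unfolding act_def fun_eq_iff pair_mtimes by auto

lemma mtimes_in_ann:
  assumes "f \<in> ann V S" "m \<in> monoms V"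
  shows "mtimes m f \<in> ann V S"
proof -
  have "act V (mtimes m f) U = (\<lambda>_. 0)" if U: "U \<in> S" for U
  proof -
    have "pair U (mtimes (mmul m' m) f) = 0" if "m' \<in> monoms V" for m'
      using fun_cong[of "act V f U" _ "mmul m' m"] assms U that mmul_in_monoms
      unfolding ann_def act_def by fastforce
    then show ?thesis unfolding act_def mtimes_mtimes fun_eq_iff by simp
  qed
  then show ?thesis using assms mtimes_in_polys unfolding ann_def by blast
qed

lemma is_lm_mtimes:
  assumes "is_lm f a"
  shows "is_lm (mtimes m f) (mmul m a)"
  unfolding is_lm_def
proof (intro conjI allI impI)
  show "mtimes m f (mmul m a) \<noteq> 0" using assms unfolding is_lm_def by (simp add: mtimes_mmul)
  fix m'' assume h: "mtimes m f m'' \<noteq> 0 \<and> m'' \<noteq> mmul m a"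
  then obtain k where k: "m'' = mmul m k" "f k \<noteq> 0" using supp_mtimes[of m f] by blast
  then have "lex_less k a" using assms h unfolding is_lm_def by blast
  then show "lex_less m'' (mmul m a)" using k lex_less_mmul by blast
qed

lemma is_lm_poly_in_var:
  assumes "lead_coeff p = (1::'a::zero_neq_one)"
  shows "is_lm (poly_in_var j p) (var_mono j (degree p))"
  unfolding is_lm_def
proof (intro conjI allI impI)
  show "poly_in_var j p (var_mono j (degree p)) \<noteq> 0"
    using assms unfolding poly_in_var_def by (simp add: var_mono_def)
  fix m assume h: "poly_in_var j p m \<noteq> 0 \<and> m \<noteq> var_mono j (degree p)"
  then have m: "m = var_mono j (m j)" "coeff p (m j) \<noteq> 0"
    unfolding poly_in_var_def by (auto split: if_splits)
  then have "m j < degree p" using h le_degree le_neq_implies_less by metis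
  moreover have "\<forall>i<j. m i = var_mono j (degree p) i"
    using m(1) by (metis less_irrefl_nat var_mono_def)
  ultimately show "lex_less m (var_mono j (degree p))"
    unfolding lex_less_def by (intro exI[of _ j]) (simp add: var_mono_def)
qed

lemma proj_eq_on_monoms: "x \<in> monoms {j..n} \<Longrightarrow> proj j n U x = U x"
  unfolding proj_def monoms_def by (rule arg_cong[where f=U]) (auto simp: fun_eq_iff)

lemma Jj_subset_polys: "Jj n t u j \<subseteq> polys {j..n}"
  unfolding Jj_def ann_def by auto

lemma mem_Jj_iff:
  assumes g: "g \<in> polys {j..n}"
  shows "g \<in> Jj n t u j \<longleftrightarrow>
    (\<forall>i\<in>{1..t}. \<forall>m\<in>monoms {j..n}. (\<Sum>k\<in>supp g. g k * u i (mmul m k)) = 0)"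
proof -
  have "(\<Sum>k\<in>supp g. g k * proj j n (u i) (mmul m k)) = (\<Sum>k\<in>supp g. g k * u i (mmul m k))"
    if "m \<in> monoms {j..n}" for i m
  proof (intro sum.cong refl)
    fix k assume "k \<in> supp g"
    then have "mmul m k \<in> monoms {j..n}" using that g polys_supp_monoms mmul_in_monoms by blast
    then show "g k * proj j n (u i) (mmul m k) = g k * u i (mmul m k)"
      by (simp add: proj_eq_on_monoms)
  qed
  then show ?thesis unfolding Jj_def ann_def using g by (auto simp: act_eq_0_iff)
qed

lemma ann_inter_polys_subset_Jj:
  assumes j: "j \<in> {1..n}" and f: "f \<in> ann {1..n} (u ` {1..t})" "f \<in> polys {j..n}"
  shows "f \<in> Jj n t u j"
proof -
  have "monoms {j..n} \<subseteq> monoms {1..n}" using j by (intro monoms_mono) auto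
  moreover have "\<forall>i\<in>{1..t}. \<forall>m\<in>monoms {1..n}. (\<Sum>k\<in>supp f. f k * u i (mmul m k)) = 0"
    using f(1) unfolding ann_def act_eq_0_iff by auto
  ultimately show ?thesis using mem_Jj_iff[OF f(2)] by blast
qed

lemma mtimes_in_Jj: "g \<in> Jj n t u j \<Longrightarrow> m \<in> monoms {j..n} \<Longrightarrow> mtimes m g \<in> Jj n t u j"
  unfolding Jj_def by (rule mtimes_in_ann)

lemma card_le_quot_dim:
  assumes "bdd_above (indep_cards V I)" "finite S" "S \<subseteq> polys V" "lin_indep_mod I S"
  shows "card S \<le> quot_dim V I"
  unfolding quot_dim_def using assms by (intro cSup_upper) (auto simp: indep_cards_def)

lemma zero_dimensional_Jj:
  assumes zerodim: "zero_dimensional {1..n} (ann {1..n} (u ` {1..t}))" and j: "j \<in> {1..n}"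
  shows "zero_dimensional {j..n} (Jj n t u j)"
proof -
  have "indep_cards {j..n} (Jj n t u j) \<subseteq> indep_cards {1..n} (ann {1..n} (u ` {1..t}))"
  proof
    fix x assume "x \<in> indep_cards {j..n} (Jj n t u j)"
    then obtain S where S: "x = card S" "finite S" "S \<subseteq> polys {j..n}" "lin_indep_mod (Jj n t u j) S"
      unfolding indep_cards_def by auto
    have "S \<subseteq> polys {1..n}" using S(3) polys_mono[of "{j..n}" "{1..n}"] j by auto
    moreover have "lin_indep_mod (ann {1..n} (u ` {1..t})) S"
      using S(2-4) ann_inter_polys_subset_Jj[OF j] lincomb_in_polys
      unfolding lin_indep_mod_def by blast
    ultimately show "x \<in> indep_cards {1..n} (ann {1..n} (u ` {1..t}))"
      unfolding indep_cards_def using S by blast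
  qed
  with zerodim show ?thesis unfolding zero_dimensional_def by (rule bdd_above_mono)
qed

section \<open>Pivot columns of the reduced row echelon form\<close>

lemma mult_mat_vec_nth:
  assumes "A \<in> carrier_mat nr nc" "x \<in> carrier_vec nc" "r < nr"
  shows "(A *\<^sub>v x) $ r = (\<Sum>k\<in>{0..<nc}. A $$ (r, k) * x $ k)"
  using assms by (auto simp: scalar_prod_def intro!: sum.cong)

lemma sum_split_at_last_nonzero:
  fixes h :: "nat \<Rightarrow> 'a::comm_monoid_add"
  assumes "c < nc" "\<And>k. c < k \<Longrightarrow> k < nc \<Longrightarrow> h k = 0"
  shows "(\<Sum>k\<in>{0..<nc}. h k) = h c + (\<Sum>k\<in>{0..<c}. h k)"
proof -
  have "(\<Sum>k\<in>{0..<nc}. h k) = (\<Sum>k\<in>{0..<Suc c}. h k) + (\<Sum>k\<in>{Suc c..<nc}. h k)"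
    using assms(1) by (intro sum.atLeastLessThan_concat[symmetric]) auto
  also have "(\<Sum>k\<in>{Suc c..<nc}. h k) = 0" using assms(2) by (intro sum.neutral) auto
  finally show ?thesis by (simp add: add.commute)
qed

definition dep_col :: "'a::field mat \<Rightarrow> nat \<Rightarrow> bool" where
  "dep_col A c \<longleftrightarrow> (\<exists>x\<in>carrier_vec (dim_col A). A *\<^sub>v x = 0\<^sub>v (dim_row A) \<and> x $ c = 1 \<and>
      (\<forall>k. c < k \<and> k < dim_col A \<longrightarrow> x $ k = 0))"

lemma dep_col_gauss_jordan_iff:
  assumes A: "A \<in> carrier_mat nr nc"
  shows "dep_col (gauss_jordan_single A) c \<longleftrightarrow> dep_col A c"
  using gauss_jordan_single(1,2)[OF A refl] A unfolding dep_col_def by auto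

lemma pivot_cols_pivot_fun:
  fixes G :: "'a::field mat"
  assumes G: "G \<in> carrier_mat nr nc" and p: "pivot_fun G f nc"
  shows "pivot_cols G = {c. c < nc \<and> (\<exists>r<nr. f r = c)}"
proof (intro equalityI subsetI)
  note pD = pivot_funD[OF carrier_matD(1)[OF G] p]
  fix c assume "c \<in> pivot_cols G"
  then obtain r where r: "c < nc" "r < nr" "G $$ (r, c) \<noteq> 0" "\<forall>c'<c. G $$ (r, c') = 0"
    unfolding pivot_cols_def using G by auto
  have "\<not> c < f r" using pD(2)[OF r(2)] r(3) by auto
  moreover have "\<not> f r < c"
  proof
    assume "f r < c"
    then have "G $$ (r, f r) = 1" "G $$ (r, f r) = 0" using pD(4)[OF r(2)] r(1,4) by auto
    then show False by simp
  qed
  ultimately show "c \<in> {c. c < nc \<and> (\<exists>r<nr. f r = c)}" using r by auto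
next
  note pD = pivot_funD[OF carrier_matD(1)[OF G] p]
  fix c assume "c \<in> {c. c < nc \<and> (\<exists>r<nr. f r = c)}"
  then obtain r where r: "c < nc" "r < nr" "f r = c" by auto
  then show "c \<in> pivot_cols G"
    unfolding pivot_cols_def using G pD(2)[OF r(2)] pD(4)[OF r(2)] by auto
qed

lemma pivot_col_not_dep:
  assumes G: "G \<in> carrier_mat nr nc" and p: "pivot_fun G f nc"
    and r: "r < nr" "f r = c" and c: "c < nc"
  shows "\<not> dep_col G c"
proof
  note pD = pivot_funD[OF carrier_matD(1)[OF G] p]
  assume "dep_col G c"
  then obtain x where x: "x \<in> carrier_vec nc" "G *\<^sub>v x = 0\<^sub>v nr" "x $ c = 1"
      "\<forall>k. c < k \<and> k < nc \<longrightarrow> x $ k = 0"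
    unfolding dep_col_def using G by auto
  have "(G *\<^sub>v x) $ r = (\<Sum>k\<in>{0..<nc}. G $$ (r, k) * x $ k)"
    using mult_mat_vec_nth[OF G x(1) r(1)] .
  also have "\<dots> = G $$ (r, c) + (\<Sum>k\<in>{0..<c}. G $$ (r, k) * x $ k)"
    using x by (subst sum_split_at_last_nonzero[OF c]) auto
  also have "(\<Sum>k\<in>{0..<c}. G $$ (r, k) * x $ k) = 0"
    using pD(2)[OF r(1)] r(2) by (intro sum.neutral) auto
  also have "G $$ (r, c) = 1" using pD(4)[OF r(1)] r(2) c by auto
  finally show False using x(2) r(1) by simp
qed

lemma pivot_row_mult_col_sum:
  fixes G :: "'a::field mat"
  assumes G: "G \<in> carrier_mat nr nc" and p: "pivot_fun G f nc"
    and r: "r < nr" "f r < nc" and k: "k < nc"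
  shows "G $$ (r, k) * (\<Sum>r'\<in>{r'. r' < nr \<and> f r' = k}. G $$ (r', c)) =
    (if k = f r then G $$ (r, c) else 0)"
proof -
  note pD = pivot_funD[OF carrier_matD(1)[OF G] p]
  have "G $$ (r, k) * G $$ (r', c) = (if r' = r then G $$ (r, c) else 0)"
    if r': "r' < nr" "f r' = k" for r'
    using pD(4)[OF r] pD(5)[of r' r] r r' k by (cases "r' = r") auto
  then have "(\<Sum>r'\<in>{r'. r' < nr \<and> f r' = k}. G $$ (r, k) * G $$ (r', c)) =
      (\<Sum>r'\<in>{r'. r' < nr \<and> f r' = k}. if r' = r then G $$ (r, c) else 0)"
    by (intro sum.cong) auto
  also have "\<dots> = (if k = f r then G $$ (r, c) else 0)"
    using r by (subst sum.delta) auto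
  finally show ?thesis by (simp add: sum_distrib_left)
qed

text \<open>The kernel vector has entry \<open>1\<close> at \<open>c\<close> and \<open>- G $$ (r, c)\<close> at the pivot column
  \<open>f r < c\<close> of each row \<open>r\<close>; since \<open>G $$ (r, f r')\<close> is \<open>1\<close> for \<open>r' = r\<close> and \<open>0\<close>
  otherwise, every row of \<open>G\<close> annihilates it.\<close>

lemma non_pivot_col_dep:
  assumes G: "G \<in> carrier_mat nr nc" and p: "pivot_fun G f nc"
    and c: "c < nc" and nf: "\<forall>r<nr. f r \<noteq> c"
  shows "dep_col G c"
proof -
  note pD = pivot_funD[OF carrier_matD(1)[OF G] p]
  define y where "y k = - (\<Sum>r'\<in>{r'. r' < nr \<and> f r' = k}. G $$ (r', c))" for k
  define x where "x = vec nc (\<lambda>k. if k = c then 1 else if k < c then y k else 0)"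
  have xc: "x \<in> carrier_vec nc" unfolding x_def by simp
  have row: "(\<Sum>k\<in>{0..<nc}. G $$ (r, k) * x $ k) = 0" if r: "r < nr" for r
  proof -
    have eq: "(\<Sum>k\<in>{0..<nc}. G $$ (r, k) * x $ k) = G $$ (r, c) + (\<Sum>k\<in>{0..<c}. G $$ (r, k) * y k)"
      by (subst sum_split_at_last_nonzero[OF c]) (use c in \<open>auto simp: x_def intro!: sum.cong\<close>)
    consider "nc \<le> f r" | "c < f r" | "f r < c" using nf r by (meson linorder_neqE_nat not_less)
    then show ?thesis
    proof cases
      case 1
      then show ?thesis using pD(2)[OF r] by (intro sum.neutral) auto
    next
      case 2
      then show ?thesis unfolding eq using pD(2)[OF r] by auto
    next
      case 3
      have "G $$ (r, k) * y k = - (if k = f r then G $$ (r, c) else 0)" if "k < c" for k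
        using pivot_row_mult_col_sum[OF G p r _, of k c] that 3 c unfolding y_def by simp
      then have "(\<Sum>k\<in>{0..<c}. G $$ (r, k) * y k) = (\<Sum>k\<in>{0..<c}. - (if k = f r then G $$ (r, c) else 0))"
        by (intro sum.cong) auto
      also have "\<dots> = - G $$ (r, c)" using 3 by (simp add: sum_negf sum.delta)
      finally show ?thesis unfolding eq by simp
    qed
  qed
  have "G *\<^sub>v x = 0\<^sub>v nr"
    using row mult_mat_vec_nth[OF G xc] G by (intro eq_vecI) auto
  then show ?thesis unfolding dep_col_def using G xc c by (auto simp: x_def)
qed

lemma pivot_cols_gauss_jordan_iff:
  assumes A: "A \<in> carrier_mat nr nc" and c: "c < nc"
  shows "c \<in> pivot_cols (gauss_jordan_single A) \<longleftrightarrow> \<not> dep_col A c"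
proof -
  define G where "G = gauss_jordan_single A"
  note gj = gauss_jordan_single[OF A G_def[symmetric]]
  obtain f where p: "pivot_fun G f nc" using gj(2,3) unfolding row_echelon_form_def by auto
  have "c \<in> pivot_cols G \<longleftrightarrow> \<not> dep_col G c"
    using pivot_cols_pivot_fun[OF gj(2) p] pivot_col_not_dep[OF gj(2) p _ _ c]
      non_pivot_col_dep[OF gj(2) p c] c by auto
  then show ?thesis unfolding G_def dep_col_gauss_jordan_iff[OF A] .
qed

section \<open>The columns of \<open>M\<close> as vectors\<close>

definition fscale :: "'a::comm_ring_1 \<Rightarrow> ('b \<Rightarrow> 'a) \<Rightarrow> ('b \<Rightarrow> 'a)" where
  "fscale c f = (\<lambda>x. c * f x)"

interpretation fm: Modules.module "fscale :: 'a::comm_ring_1 \<Rightarrow> ('b \<Rightarrow> 'a) \<Rightarrow> ('b \<Rightarrow> 'a)"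
  by unfold_locales (simp_all add: fscale_def fun_eq_iff algebra_simps)

lemma sum_fun_apply: "(\<Sum>a\<in>A. f a) x = (\<Sum>a\<in>A. f a x)"
  by (induct A rule: infinite_finite_induct) auto

lemma sum_fscale_apply: "(\<Sum>a\<in>A. fscale (e a) (X a)) x = (\<Sum>a\<in>A. e a * X a x)"
  by (simp add: sum_fun_apply fscale_def)

lemma sum_fscale_in_span: "(\<Sum>m\<in>A. fscale (e m) (X m)) \<in> fm.span (X ` A)"
  by (intro fm.span_sum fm.span_scale fm.span_base) auto

lemma span_image_coeffs:
  assumes A: "finite A" and v: "v \<in> fm.span (X ` A)"
  shows "\<exists>e. v = (\<Sum>m\<in>A. fscale (e m) (X m))"
  using v
proof (induction rule: fm.span_induct_alt)
  case base
  show ?case by (intro exI[of _ "\<lambda>_. 0"]) (simp add: fun_eq_iff sum_fscale_apply)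
next
  case (step c x y)
  then obtain m0 e where m0: "m0 \<in> A" "x = X m0" and e: "y = (\<Sum>m\<in>A. fscale (e m) (X m))" by auto
  show ?case
  proof (intro exI[of _ "\<lambda>m. e m + (if m = m0 then c else 0)"])
    show "fscale c x + y = (\<Sum>m\<in>A. fscale (e m + (if m = m0 then c else 0)) (X m))"
      unfolding e m0 using A m0(1)
      by (simp add: fun_eq_iff sum_fun_apply fscale_def distrib_right sum.distrib
          if_distrib[of "\<lambda>z. z * _"] sum.delta cong: if_cong)
  qed
qed

lemma in_span_of_relation:
  fixes a :: "'c \<Rightarrow> 'a::field"
  assumes K: "finite K" "m \<in> K" "a m \<noteq> 0" and rel: "(\<Sum>k\<in>K. fscale (a k) (X k)) = 0"
  shows "X m \<in> fm.span (X ` (K - {m}))"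
proof -
  define S where "S = (\<Sum>k\<in>K - {m}. fscale (a k) (X k))"
  have "fscale (a m) (X m) + S = 0"
    using rel sum.remove[OF K(1,2), of "\<lambda>k. fscale (a k) (X k)"] unfolding S_def by simp
  then have "fscale (a m) (X m) = - S" by (simp add: eq_neg_iff_add_eq_0)
  then have "fscale (inverse (a m)) (fscale (a m) (X m)) = fscale (- inverse (a m)) S"
    by (simp add: fscale_def fun_eq_iff)
  then have "X m = fscale (- inverse (a m)) S"
    using K(3) by (simp add: fscale_def fun_eq_iff mult.assoc[symmetric])
  moreover have "S \<in> fm.span (X ` (K - {m}))" unfolding S_def by (rule sum_fscale_in_span)
  ultimately show ?thesis by (simp add: fm.span_scale fm.span_neg)
qed

lemma unit_relation_iff_in_span:
  fixes X :: "nat \<Rightarrow> 'b \<Rightarrow> 'a::field"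
  assumes c: "c < nc"
  shows "(\<exists>x. (\<Sum>k\<in>{0..<nc}. fscale (x k) (X k)) = 0 \<and> x c = 1 \<and> (\<forall>k. c < k \<and> k < nc \<longrightarrow> x k = 0))
    \<longleftrightarrow> X c \<in> fm.span (X ` {0..<c})"
proof
  assume "\<exists>x. (\<Sum>k\<in>{0..<nc}. fscale (x k) (X k)) = 0 \<and> x c = 1 \<and> (\<forall>k. c < k \<and> k < nc \<longrightarrow> x k = 0)"
  then obtain x where x: "(\<Sum>k\<in>{0..<nc}. fscale (x k) (X k)) = 0" "x c = 1"
      "\<forall>k. c < k \<and> k < nc \<longrightarrow> x k = 0" by blast
  have "X c + (\<Sum>k\<in>{0..<c}. fscale (x k) (X k)) = 0"
    using x sum_split_at_last_nonzero[OF c, of "\<lambda>k. fscale (x k) (X k)"] by simp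
  then have "X c = - (\<Sum>k\<in>{0..<c}. fscale (x k) (X k))" by (simp add: eq_neg_iff_add_eq_0)
  then show "X c \<in> fm.span (X ` {0..<c})" by (simp add: fm.span_neg sum_fscale_in_span)
next
  assume "X c \<in> fm.span (X ` {0..<c})"
  then obtain e where e: "X c = (\<Sum>k\<in>{0..<c}. fscale (e k) (X k))"
    using span_image_coeffs[of "{0..<c}"] by blast
  define x where "x k = (if k = c then 1 else if k < c then - e k else 0)" for k
  have "(\<Sum>k\<in>{0..<nc}. fscale (x k) (X k)) = X c + (\<Sum>k\<in>{0..<c}. fscale (- e k) (X k))"
    by (subst sum_split_at_last_nonzero[OF c]) (auto simp: x_def intro!: sum.cong)
  also have "\<dots> = 0" by (simp add: e sum_negf)
  finally show "\<exists>x. (\<Sum>k\<in>{0..<nc}. fscale (x k) (X k)) = 0 \<and> x c = 1 \<and> (\<forall>k. c < k \<and> k < nc \<longrightarrow> x k = 0)"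
    by (intro exI[of _ x]) (simp add: x_def)
qed

definition hcol :: "nat \<Rightarrow> (nat \<Rightarrow> mono \<Rightarrow> 'a::comm_ring_1) \<Rightarrow> mono set \<Rightarrow> mono \<Rightarrow> (nat \<times> mono \<Rightarrow> 'a)" where
  "hcol t u C m = (\<lambda>(i, b'). if i \<in> {1..t} \<and> b' \<in> C then u i (mmul m b') else 0)"

lemma sum_fscale_hcol_apply:
  "(\<Sum>s\<in>S. fscale (e s) (hcol t u C (g s))) (i, b') =
    (if i \<in> {1..t} \<and> b' \<in> C then (\<Sum>s\<in>S. e s * u i (mmul (g s) b')) else 0)"
  unfolding sum_fscale_apply hcol_def by (cases "i \<in> {1..t} \<and> b' \<in> C") auto

lemma sum_fscale_hcol_eq_0_iff:
  "(\<Sum>s\<in>S. fscale (e s) (hcol t u C (g s))) = 0 \<longleftrightarrow>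
    (\<forall>i\<in>{1..t}. \<forall>b'\<in>C. (\<Sum>s\<in>S. e s * u i (mmul (g s) b')) = 0)"
  by (auto simp: fun_eq_iff sum_fscale_hcol_apply)

lemma Mmat_carrier: "Mmat t u C \<in> carrier_mat (length (row_list t C)) (length (sorted_lex C))"
  unfolding Mmat_def Let_def by simp

lemma Mmat_mult_vec_eq_0_iff:
  assumes C: "finite C" and x: "x \<in> carrier_vec (length (sorted_lex C))"
  shows "Mmat t u C *\<^sub>v x = 0\<^sub>v (length (row_list t C)) \<longleftrightarrow>
    (\<Sum>k\<in>{0..<length (sorted_lex C)}. fscale (x $ k) (hcol t u C (sorted_lex C ! k))) = 0"
proof -
  define rs where "rs = row_list t C"
  define cs where "cs = sorted_lex C"
  have M: "Mmat t u C \<in> carrier_mat (length rs) (length cs)"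
    unfolding rs_def cs_def by (rule Mmat_carrier)
  have row: "(Mmat t u C *\<^sub>v x) $ r =
      (\<Sum>k\<in>{0..<length cs}. x $ k * u (fst (rs ! r)) (mmul (cs ! k) (snd (rs ! r))))"
    if "r < length rs" for r
    using mult_mat_vec_nth[OF M x[folded cs_def] that] that
    by (auto simp: Mmat_def Let_def rs_def cs_def mult.commute split: prod.splits intro!: sum.cong)
  have "Mmat t u C *\<^sub>v x = 0\<^sub>v (length rs) \<longleftrightarrow>
      (\<forall>r<length rs. (\<Sum>k\<in>{0..<length cs}. x $ k * u (fst (rs ! r)) (mmul (cs ! k) (snd (rs ! r)))) = 0)"
    using row M by (auto simp: vec_eq_iff)
  also have "\<dots> \<longleftrightarrow> (\<forall>p\<in>{1..t} \<times> C. (\<Sum>k\<in>{0..<length cs}. x $ k * u (fst p) (mmul (cs ! k) (snd p))) = 0)"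
    unfolding set_row_list[OF C, of t, folded rs_def, symmetric] all_set_conv_all_nth ..
  also have "\<dots> \<longleftrightarrow> (\<Sum>k\<in>{0..<length cs}. fscale (x $ k) (hcol t u C (cs ! k))) = 0"
    unfolding sum_fscale_hcol_eq_0_iff by auto
  finally show ?thesis unfolding rs_def cs_def .
qed

lemma dep_col_Mmat_iff:
  assumes C: "finite C" and c: "c < length (sorted_lex C)"
  shows "dep_col (Mmat t u C) c \<longleftrightarrow>
    hcol t u C (sorted_lex C ! c) \<in> fm.span ((\<lambda>k. hcol t u C (sorted_lex C ! k)) ` {0..<c})"
proof -
  define nc where "nc = length (sorted_lex C)"
  let ?X = "\<lambda>k. hcol t u C (sorted_lex C ! k)"
  have "dep_col (Mmat t u C) c \<longleftrightarrow>
      (\<exists>x\<in>carrier_vec nc. (\<Sum>k\<in>{0..<nc}. fscale (x $ k) (?X k)) = 0 \<and> x $ c = 1 \<and>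
         (\<forall>k. c < k \<and> k < nc \<longrightarrow> x $ k = 0))"
    unfolding dep_col_def nc_def using Mmat_carrier[of t u C] Mmat_mult_vec_eq_0_iff[OF C] by auto
  also have "\<dots> \<longleftrightarrow> (\<exists>x. (\<Sum>k\<in>{0..<nc}. fscale (x k) (?X k)) = 0 \<and> x c = 1 \<and>
         (\<forall>k. c < k \<and> k < nc \<longrightarrow> x k = 0))"
  proof
    assume "\<exists>x. (\<Sum>k\<in>{0..<nc}. fscale (x k) (?X k)) = 0 \<and> x c = 1 \<and> (\<forall>k. c < k \<and> k < nc \<longrightarrow> x k = 0)"
    then obtain x where "(\<Sum>k\<in>{0..<nc}. fscale (x k) (?X k)) = 0" "x c = 1"
        "\<forall>k. c < k \<and> k < nc \<longrightarrow> x k = 0" by blast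
    then show "\<exists>x\<in>carrier_vec nc. (\<Sum>k\<in>{0..<nc}. fscale (x $ k) (?X k)) = 0 \<and> x $ c = 1 \<and>
         (\<forall>k. c < k \<and> k < nc \<longrightarrow> x $ k = 0)"
      using c unfolding nc_def[symmetric] by (intro bexI[of _ "vec nc x"]) auto
  qed blast
  also have "\<dots> \<longleftrightarrow> ?X c \<in> fm.span (?X ` {0..<c})"
    using c unfolding nc_def[symmetric] by (rule unit_relation_iff_in_span)
  finally show ?thesis .
qed

definition lex_pivots :: "nat \<Rightarrow> (nat \<Rightarrow> mono \<Rightarrow> 'a::field) \<Rightarrow> mono set \<Rightarrow> mono set" where
  "lex_pivots t u C = {b \<in> C. hcol t u C b \<notin> fm.span (hcol t u C ` {m \<in> C. lex_less m b})}"

lemma pivot_cols_Mmat_iff: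
  fixes u :: "nat \<Rightarrow> mono \<Rightarrow> 'a::field"
  assumes C: "finite C" and c: "c < length (sorted_lex C)"
  shows "c \<in> pivot_cols (gauss_jordan_single (Mmat t u C)) \<longleftrightarrow> sorted_lex C ! c \<in> lex_pivots t u C"
proof -
  have "c \<in> pivot_cols (gauss_jordan_single (Mmat t u C)) \<longleftrightarrow> \<not> dep_col (Mmat t u C) c"
    by (rule pivot_cols_gauss_jordan_iff[OF Mmat_carrier c])
  also have "\<dots> \<longleftrightarrow> hcol t u C (sorted_lex C ! c) \<notin> fm.span ((\<lambda>k. hcol t u C (sorted_lex C ! k)) ` {0..<c})"
    using dep_col_Mmat_iff[OF C c] by simp
  also have "(\<lambda>k. hcol t u C (sorted_lex C ! k)) ` {0..<c} = hcol t u C ` {m \<in> C. lex_less m (sorted_lex C ! c)}"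
    by (simp only: sorted_lex_prefix[OF C c] image_image)
  finally have "c \<in> pivot_cols (gauss_jordan_single (Mmat t u C)) \<longleftrightarrow>
      hcol t u C (sorted_lex C ! c) \<notin> fm.span (hcol t u C ` {m \<in> C. lex_less m (sorted_lex C ! c)})" .
  moreover have "sorted_lex C ! c \<in> C" using c sorted_lex(2)[OF C] nth_mem by blast
  ultimately show ?thesis unfolding lex_pivots_def by blast
qed

lemma Bprime_eq_lex_pivots:
  assumes C: "finite (Cset j B Bp)"
  shows "Bprime t B j u Bp = lex_pivots t u (Cset j B Bp)"
proof -
  define cs where "cs = sorted_lex (Cset j B Bp)"
  have "dim_col (gauss_jordan_single (Mmat t u (Cset j B Bp))) = length cs"
    using gauss_jordan_single(2)[OF Mmat_carrier[of t u "Cset j B Bp"] refl] unfolding cs_def by simp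
  then have "c \<in> pivot_cols (gauss_jordan_single (Mmat t u (Cset j B Bp))) \<longleftrightarrow>
      c < length cs \<and> cs ! c \<in> lex_pivots t u (Cset j B Bp)" for c
  proof (cases "c < length cs")
    case True
    then show ?thesis using pivot_cols_Mmat_iff[OF C, of c t u] unfolding cs_def by simp
  qed (simp add: pivot_cols_def)
  then have "pivot_cols (gauss_jordan_single (Mmat t u (Cset j B Bp))) =
      {c. c < length cs \<and> cs ! c \<in> lex_pivots t u (Cset j B Bp)}"
    by blast
  moreover have "lex_pivots t u (Cset j B Bp) \<subseteq> set cs"
    using sorted_lex(2)[OF C] unfolding lex_pivots_def cs_def by blast
  ultimately have "(!) cs ` pivot_cols (gauss_jordan_single (Mmat t u (Cset j B Bp))) = lex_pivots t u (Cset j B Bp)"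
    by (force simp: in_set_conv_nth)
  then show ?thesis unfolding Bprime_def Let_def cs_def .
qed

lemma Cset_finite: "finite Bp \<Longrightarrow> finite (Cset j B Bp)"
proof -
  assume "finite Bp"
  moreover have "Cset j B Bp = (\<lambda>(b', k). mmul b' (var_mono j k)) ` (Bp \<times> {..<B})"
    unfolding Cset_def by auto
  ultimately show ?thesis by simp
qed

lemma Cset_subset_monoms:
  assumes "Bp \<subseteq> monoms {j+1..n}" "j \<le> n"
  shows "Cset j B Bp \<subseteq> monoms {j..n}"
proof
  fix b assume "b \<in> Cset j B Bp"
  then obtain b' k where b: "b = mmul b' (var_mono j k)" "b' \<in> Bp" unfolding Cset_def by auto
  have "b' \<in> monoms {j..n}" using b(2) assms(1) monoms_mono[of "{j+1..n}" "{j..n}"] by auto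
  moreover have "var_mono j k \<in> monoms {j..n}" using assms(2) by (intro var_mono_in_monoms) auto
  ultimately show "b \<in> monoms {j..n}" using b(1) mmul_in_monoms by blast
qed

section \<open>Relations among the columns coming from \<open>J\<^sub>j\<close>\<close>

lemma hcol_relation:
  assumes g: "g \<in> Jj n t u j" and C: "C \<subseteq> monoms {j..n}"
  shows "(\<Sum>k\<in>supp g. fscale (g k) (hcol t u C k)) = 0"
  using g C Jj_subset_polys mem_Jj_iff
  unfolding sum_fscale_hcol_eq_0_iff by (fastforce simp: mmul_commute)

lemma hcol_lm_in_span:
  fixes u :: "nat \<Rightarrow> mono \<Rightarrow> 'a::field"
  assumes g: "g \<in> Jj n t u j" "is_lm g m" and C: "C \<subseteq> monoms {j..n}"
  shows "hcol t u C m \<in> fm.span (hcol t u C ` (supp g - {m}))"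
proof (rule in_span_of_relation)
  show "finite (supp g)" using g(1) Jj_subset_polys unfolding polys_def by blast
  show "m \<in> supp g" "g m \<noteq> 0" using g(2) unfolding is_lm_def by auto
qed (rule hcol_relation[OF g(1) C])

lemma is_lm_Jj_not_lex_pivot:
  assumes g: "g \<in> Jj n t u j" "is_lm g b" "supp g \<subseteq> C" and C: "C \<subseteq> monoms {j..n}"
  shows "b \<notin> lex_pivots t u C"
proof -
  have "supp g - {b} \<subseteq> {m \<in> C. lex_less m b}" using g unfolding is_lm_def by auto
  then have "hcol t u C b \<in> fm.span (hcol t u C ` {m \<in> C. lex_less m b})"
    using hcol_lm_in_span[OF g(1,2) C] fm.span_mono[OF image_mono] by blast
  then show ?thesis unfolding lex_pivots_def by blast
qed

definition monomial_fun :: "mono \<Rightarrow> mono \<Rightarrow> 'a::{zero, one}" where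
  "monomial_fun b = (\<lambda>m. if m = b then 1 else 0)"

lemma inj_monomial_fun: "inj (monomial_fun :: mono \<Rightarrow> mono \<Rightarrow> 'a::zero_neq_one)"
  unfolding inj_def monomial_fun_def by (metis zero_neq_one)

lemma monomial_fun_in_polys: "b \<in> monoms V \<Longrightarrow> monomial_fun b \<in> polys V"
  unfolding polys_def monomial_fun_def by auto

lemma lin_indep_mod_lex_pivots:
  fixes u :: "nat \<Rightarrow> mono \<Rightarrow> 'a::field"
  assumes C: "finite C" "C \<subseteq> monoms {j..n}"
  shows "lin_indep_mod (Jj n t u j) (monomial_fun ` lex_pivots t u C)"
  unfolding lin_indep_mod_def
proof (intro allI impI ballI)
  define P where "P = lex_pivots t u C"
  have P: "finite P" "P \<subseteq> C" using C(1) unfolding P_def lex_pivots_def by auto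
  fix c and s :: "mono \<Rightarrow> 'a" assume f: "lincomb (monomial_fun ` P) c \<in> Jj n t u j" and s: "s \<in> monomial_fun ` P"
  define f where "f = lincomb (monomial_fun ` P) c"
  have fval: "f m = (if m \<in> P then c (monomial_fun m) else 0)" for m
  proof -
    have "f m = (\<Sum>b\<in>P. c (monomial_fun b) * monomial_fun b m)"
      unfolding f_def lincomb_def
      by (simp add: sum.reindex[OF inj_on_subset[OF inj_monomial_fun subset_UNIV]])
    also have "\<dots> = (if m \<in> P then c (monomial_fun m) else 0)"
      using P(1) by (simp add: monomial_fun_def if_distrib[of "\<lambda>z. _ * z"] sum.delta cong: if_cong)
    finally show ?thesis .
  qed
  have suppP: "supp f \<subseteq> P" using fval by (auto split: if_splits)
  show "c s = 0"
  proof (rule ccontr)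
    assume "c s \<noteq> 0"
    then obtain b where "b \<in> P" "f b \<noteq> 0" using s fval by auto
    then obtain b0 where b0: "is_lm f b0"
      using ex_is_lm[of f] finite_subset[OF suppP P(1)] by blast
    then have "b0 \<in> P" using suppP unfolding is_lm_def by auto
    moreover have "b0 \<notin> lex_pivots t u C"
      using is_lm_Jj_not_lex_pivot[OF _ b0 _ C(2)] f suppP P(2) unfolding f_def by blast
    ultimately show False unfolding P_def by blast
  qed
qed

lemma card_lex_pivots_le_quot_dim:
  fixes u :: "nat \<Rightarrow> mono \<Rightarrow> 'a::field"
  assumes zerodim: "zero_dimensional {j..n} (Jj n t u j)"
    and C: "finite C" "C \<subseteq> monoms {j..n}"
  shows "card (lex_pivots t u C) \<le> quot_dim {j..n} (Jj n t u j)"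
proof -
  have P: "finite (lex_pivots t u C)" "lex_pivots t u C \<subseteq> monoms {j..n}"
    using C unfolding lex_pivots_def by auto
  have "card (monomial_fun ` lex_pivots t u C :: (mono \<Rightarrow> 'a) set) = card (lex_pivots t u C)"
    using inj_on_subset[OF inj_monomial_fun] by (rule card_image) simp
  moreover have "card (monomial_fun ` lex_pivots t u C :: (mono \<Rightarrow> 'a) set) \<le> quot_dim {j..n} (Jj n t u j)"
    using zerodim P monomial_fun_in_polys lin_indep_mod_lex_pivots[OF C]
    unfolding zero_dimensional_def by (intro card_le_quot_dim) auto
  ultimately show ?thesis by simp
qed

section \<open>Standard monomials and pivots\<close>

lemma hcol_in_span_std_monos:
  fixes u :: "nat \<Rightarrow> mono \<Rightarrow> 'a::field"
  assumes C: "C \<subseteq> monoms {j..n}"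
  shows "m \<in> monoms {j..n} \<Longrightarrow>
    hcol t u C m \<in> fm.span (hcol t u C ` {s \<in> std_monos {j..n} (Jj n t u j). s = m \<or> lex_less s m})"
proof (induction m rule: wf_induct[OF wf_lex_less_monoms[of n]])
  case (1 m)
  let ?S = "\<lambda>m. {s \<in> std_monos {j..n} (Jj n t u j). s = m \<or> lex_less s m}"
  show ?case
  proof (cases "m \<in> std_monos {j..n} (Jj n t u j)")
    case True
    then show ?thesis by (intro fm.span_base) auto
  next
    case False
    then obtain g where g: "g \<in> Jj n t u j" "is_lm g m" using 1(2) unfolding std_monos_def by auto
    have "hcol t u C k \<in> fm.span (hcol t u C ` ?S m)" if k: "k \<in> supp g - {m}" for k
    proof -
      have km: "lex_less k m" using g(2) k unfolding is_lm_def by auto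
      have "k \<in> monoms {j..n}" using g(1) k Jj_subset_polys polys_supp_monoms by blast
      moreover have "m \<in> monoms {..n}" using 1(2) monoms_mono[of "{j..n}" "{..n}"] by auto
      ultimately have "hcol t u C k \<in> fm.span (hcol t u C ` ?S k)" using 1(1) km by blast
      also have "\<dots> \<subseteq> fm.span (hcol t u C ` ?S m)"
        using km lex_less_trans by (intro fm.span_mono image_mono) auto
      finally show ?thesis .
    qed
    then have "fm.span (hcol t u C ` (supp g - {m})) \<subseteq> fm.span (hcol t u C ` ?S m)"
      by (intro fm.span_minimal) auto
    then show ?thesis using hcol_lm_in_span[OF g C] by blast
  qed
qed

text \<open>Once the standard monomials lie in \<open>C\<close>, the rows of \<open>M\<close> indexed by \<open>C\<close> determine
  all the others, so a relation among the columns is an element of \<open>J\<^sub>j\<close>.\<close>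

lemma in_Jj_of_hcol_relation:
  fixes u :: "nat \<Rightarrow> mono \<Rightarrow> 'a::field"
  assumes C: "finite C" "C \<subseteq> monoms {j..n}" and SC: "std_monos {j..n} (Jj n t u j) \<subseteq> C"
    and g: "g \<in> polys {j..n}" "supp g \<subseteq> C"
    and rel: "(\<Sum>k\<in>supp g. fscale (g k) (hcol t u C k)) = 0"
  shows "g \<in> Jj n t u j"
  unfolding mem_Jj_iff[OF g(1)]
proof (intro ballI)
  define S where "S = std_monos {j..n} (Jj n t u j)"
  have S: "S \<subseteq> C" "finite S" using SC finite_subset[OF SC C(1)] unfolding S_def by simp_all
  fix i m assume i: "i \<in> {1..t}" and m: "m \<in> monoms {j..n}"
  have "hcol t u C m \<in> fm.span (hcol t u C ` {s \<in> S. s = m \<or> lex_less s m})"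
    unfolding S_def by (rule hcol_in_span_std_monos[OF C(2) m])
  also have "\<dots> \<subseteq> fm.span (hcol t u C ` S)" by (intro fm.span_mono image_mono) auto
  finally obtain e where e_def: "hcol t u C m = (\<Sum>s\<in>S. fscale (e s) (hcol t u C s))"
    using span_image_coeffs[OF S(2)] by blast
  have e: "u i (mmul m k) = (\<Sum>s\<in>S. e s * u i (mmul s k))" if "k \<in> C" for k
  proof -
    have "hcol t u C m (i, k) = (\<Sum>s\<in>S. fscale (e s) (hcol t u C s)) (i, k)"
      using e_def by simp
    then show ?thesis using i that unfolding sum_fscale_hcol_apply by (simp add: hcol_def)
  qed
  have rel_s: "(\<Sum>k\<in>supp g. g k * u i (mmul k s)) = 0" if "s \<in> C" for s
    using rel i that unfolding sum_fscale_hcol_eq_0_iff by blast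
  have "(\<Sum>k\<in>supp g. g k * u i (mmul m k)) = (\<Sum>k\<in>supp g. \<Sum>s\<in>S. e s * (g k * u i (mmul k s)))"
    using e g(2) by (intro sum.cong) (auto simp: sum_distrib_left mmul_commute ac_simps)
  also have "\<dots> = (\<Sum>s\<in>S. e s * (\<Sum>k\<in>supp g. g k * u i (mmul k s)))"
    by (subst sum.swap) (simp add: sum_distrib_left)
  also have "\<dots> = 0" using rel_s S(1) by (intro sum.neutral) auto
  finally show "(\<Sum>k\<in>supp g. g k * u i (mmul m k)) = 0" .
qed

lemma ex_lm_in_Jj_of_hcol_dependent:
  fixes u :: "nat \<Rightarrow> mono \<Rightarrow> 'a::field"
  assumes C: "finite C" "C \<subseteq> monoms {j..n}" and SC: "std_monos {j..n} (Jj n t u j) \<subseteq> C"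
    and b: "b \<in> C" "hcol t u C b \<in> fm.span (hcol t u C ` {m \<in> C. lex_less m b})"
  shows "\<exists>f\<in>Jj n t u j. is_lm f b"
proof -
  define L where "L = {m \<in> C. lex_less m b}"
  have L: "finite L" "L \<subseteq> C" "b \<notin> L" using C(1) lex_less_irrefl unfolding L_def by auto
  obtain a where a: "hcol t u C b = (\<Sum>c\<in>L. fscale (a c) (hcol t u C c))"
    using span_image_coeffs[OF L(1)] b(2) unfolding L_def by blast
  define f where "f m = (if m = b then 1 else 0) - (if m \<in> L then a m else (0::'a))" for m
  have suppf: "supp f \<subseteq> insert b L" unfolding f_def by auto
  have fpoly: "f \<in> polys {j..n}"
    unfolding polys_def using finite_subset[OF suppf] L suppf b(1) C(2) by auto
  have lm: "is_lm f b"
    using L(3) unfolding is_lm_def f_def L_def by (auto split: if_splits)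
  have "(\<Sum>k\<in>supp f. fscale (f k) (hcol t u C k)) = (\<Sum>k\<in>insert b L. fscale (f k) (hcol t u C k))"
    using L(1) suppf by (intro sum.mono_neutral_left) (auto simp: fscale_def fun_eq_iff)
  also have "\<dots> = fscale (f b) (hcol t u C b) + (\<Sum>k\<in>L. fscale (f k) (hcol t u C k))"
    using L by simp
  also have "\<dots> = hcol t u C b + (\<Sum>k\<in>L. fscale (- a k) (hcol t u C k))"
    using L(3) by (auto simp: f_def intro!: sum.cong)
  also have "\<dots> = 0" using a by (simp add: sum_negf)
  finally have "f \<in> Jj n t u j"
    by (intro in_Jj_of_hcol_relation[OF C SC fpoly]) (use suppf L b(1) in auto)
  then show ?thesis using lm by blast
qed

lemma lex_pivots_eq_std_monos:
  fixes u :: "nat \<Rightarrow> mono \<Rightarrow> 'a::field"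
  assumes C: "finite C" "C \<subseteq> monoms {j..n}" and SC: "std_monos {j..n} (Jj n t u j) \<subseteq> C"
  shows "lex_pivots t u C = std_monos {j..n} (Jj n t u j)"
proof (intro equalityI subsetI)
  fix b assume b: "b \<in> lex_pivots t u C"
  show "b \<in> std_monos {j..n} (Jj n t u j)"
  proof (rule ccontr)
    assume nb: "b \<notin> std_monos {j..n} (Jj n t u j)"
    have "b \<in> monoms {j..n}" using b C(2) unfolding lex_pivots_def by auto
    then have "hcol t u C b \<in> fm.span (hcol t u C ` {s \<in> std_monos {j..n} (Jj n t u j). s = b \<or> lex_less s b})"
      by (rule hcol_in_span_std_monos[OF C(2)])
    also have "\<dots> \<subseteq> fm.span (hcol t u C ` {m \<in> C. lex_less m b})"
      using nb SC by (intro fm.span_mono image_mono) auto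
    finally show False using b unfolding lex_pivots_def by blast
  qed
next
  fix b assume b: "b \<in> std_monos {j..n} (Jj n t u j)"
  then show "b \<in> lex_pivots t u C"
    using ex_lm_in_Jj_of_hcol_dependent[OF C SC] SC unfolding lex_pivots_def std_monos_def by blast
qed

section \<open>The standard monomials lie in \<open>C\<^sub>j\<^sub>+\<^sub>1\<close>\<close>

lemma mmul_fun_upd_var_mono: "mmul (b(j := 0)) (var_mono j k) = b(j := k)"
  unfolding mmul_def var_mono_def by auto

lemma fun_upd_zero_in_monoms: "b \<in> monoms V \<Longrightarrow> b(j := 0) \<in> monoms (V - {j})"
  unfolding monoms_def by auto

lemma poly_in_var_in_Jj:
  assumes j: "j \<in> {1..n}" and p: "poly_in_var j p \<in> ann {1..n} (u ` {1..t})"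
  shows "poly_in_var j p \<in> Jj n t u j"
proof (rule ann_inter_polys_subset_Jj[OF j p])
  have "poly_in_var j p \<in> polys {1..n}" using p unfolding ann_def by auto
  moreover have "m \<in> monoms {j..n}" if "poly_in_var j p m \<noteq> 0" for m
    using that j var_mono_in_monoms[of j "{j..n}" "m j"]
    unfolding poly_in_var_def by (auto split: if_splits)
  ultimately show "poly_in_var j p \<in> polys {j..n}" unfolding polys_def by auto
qed

lemma std_mono_var_degree_less:
  assumes j: "j \<le> n" and q: "poly_in_var j p \<in> Jj n t u j" "lead_coeff p = 1"
    and b: "b \<in> std_monos {j..n} (Jj n t u j)"
  shows "b j < degree p"
proof (rule ccontr)
  assume "\<not> b j < degree p"
  then have d: "degree p \<le> b j" by simp
  define mm where "mm = mmul (b(j := 0)) (var_mono j (b j - degree p))"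
  have bW: "b \<in> monoms {j..n}" using b unfolding std_monos_def by auto
  have "mm \<in> monoms {j..n}"
    unfolding mm_def using j fun_upd_zero_in_monoms[OF bW] monoms_mono[of "{j..n} - {j}" "{j..n}"]
    by (intro mmul_in_monoms var_mono_in_monoms) auto
  then have "mtimes mm (poly_in_var j p) \<in> Jj n t u j" using q(1) by (rule mtimes_in_Jj[rotated])
  moreover have "is_lm (mtimes mm (poly_in_var j p)) (mmul mm (var_mono j (degree p)))"
    using is_lm_poly_in_var[OF q(2)] by (rule is_lm_mtimes)
  moreover have "mmul mm (var_mono j (degree p)) = b"
    unfolding mm_def mmul_assoc mmul_var_mono using d by (simp add: mmul_fun_upd_var_mono)
  ultimately show False using b unfolding std_monos_def by auto
qed

lemma std_mono_drop_var:
  assumes j: "j \<le> n" and J: "Jj n t u (j+1) \<subseteq> Jj n t u j"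
    and b: "b \<in> std_monos {j..n} (Jj n t u j)"
  shows "b(j := 0) \<in> std_monos {j+1..n} (Jj n t u (j+1))"
proof -
  have bW: "b \<in> monoms {j..n}" using b unfolding std_monos_def by auto
  have "{j..n} - {j} = {j+1..n}" by auto
  then have b': "b(j := 0) \<in> monoms {j+1..n}" using fun_upd_zero_in_monoms[OF bW, of j] by simp
  have "\<not> is_lm g (b(j := 0))" if g: "g \<in> Jj n t u (j+1)" for g
  proof
    assume "is_lm g (b(j := 0))"
    then have "is_lm (mtimes (var_mono j (b j)) g) b"
      using is_lm_mtimes[of g "b(j := 0)" "var_mono j (b j)"]
        mmul_commute[of "var_mono j (b j)" "b(j := 0)"] mmul_fun_upd_var_mono[of b j "b j"]
      by simp
    moreover have "mtimes (var_mono j (b j)) g \<in> Jj n t u j"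
      using g J j by (intro mtimes_in_Jj var_mono_in_monoms) auto
    ultimately show False using b unfolding std_monos_def by auto
  qed
  then show ?thesis using b' unfolding std_monos_def by auto
qed

lemma std_monos_subset_Cset:
  assumes j: "j \<le> n" and J: "Jj n t u (j+1) \<subseteq> Jj n t u j"
    and q: "poly_in_var j p \<in> Jj n t u j" "lead_coeff p = 1" "degree p \<le> B"
  shows "std_monos {j..n} (Jj n t u j) \<subseteq> Cset j B (std_monos {j+1..n} (Jj n t u (j+1)))"
proof
  fix b assume b: "b \<in> std_monos {j..n} (Jj n t u j)"
  have "b = mmul (b(j := 0)) (var_mono j (b j))" by (simp add: mmul_fun_upd_var_mono)
  moreover have "b j < B" using std_mono_var_degree_less[OF j q(1,2) b] q(3) by simp
  ultimately show "b \<in> Cset j B (std_monos {j+1..n} (Jj n t u (j+1)))"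
    using std_mono_drop_var[OF j J b] unfolding Cset_def by blast
qed

theorem lemma6:
  fixes n t B j :: nat
    and u :: "nat \<Rightarrow> mono \<Rightarrow> 'a::field"
    and Bp :: "mono set"
  assumes perfect: "perfect_field TYPE('a)"
    and zerodim: "zero_dimensional {1..n} (ann {1..n} (u ` {1..t}))"
    and minpoly: "\<forall>k\<in>{1..n}. \<exists>p. is_min_poly (ann {1..n} (u ` {1..t})) k p \<and> degree p \<le> B"
    and j: "j \<in> {1..n}"
    and Bp_fin: "finite Bp"
    and Bp_monos: "Bp \<subseteq> monoms {j+1..n}"
    and Bp_card: "j < n \<Longrightarrow> card Bp \<le> quot_dim {j+1..n} (Jj n t u (j+1))"
    and Bp_last: "j = n \<Longrightarrow> Bp = {(\<lambda>_. 0)}"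
  shows "card (Bprime t B j u Bp) \<le> quot_dim {j..n} (Jj n t u j)
         \<and> ((j \<le> n - 1 \<and> Bp = std_monos {j+1..n} (Jj n t u (j+1))
              \<and> Jj n t u j \<inter> polys {j+1..n} = Jj n t u (j+1))
             \<longrightarrow> Bprime t B j u Bp = std_monos {j..n} (Jj n t u j))"
proof -
  define C where "C = Cset j B Bp"
  have C: "finite C" "C \<subseteq> monoms {j..n}"
    unfolding C_def using Cset_finite[OF Bp_fin] Cset_subset_monoms[OF Bp_monos] j by auto
  have Bprime: "Bprime t B j u Bp = lex_pivots t u C"
    unfolding C_def using Bprime_eq_lex_pivots[OF C(1)[unfolded C_def]] .
  have "card (Bprime t B j u Bp) \<le> quot_dim {j..n} (Jj n t u j)"
    unfolding Bprime using card_lex_pivots_le_quot_dim[OF zero_dimensional_Jj[OF zerodim j] C] .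
  moreover have "Bprime t B j u Bp = std_monos {j..n} (Jj n t u j)"
    if std: "Bp = std_monos {j+1..n} (Jj n t u (j+1))" and J: "Jj n t u j \<inter> polys {j+1..n} = Jj n t u (j+1)"
  proof -
    obtain p where p: "is_min_poly (ann {1..n} (u ` {1..t})) j p" "degree p \<le> B"
      using minpoly j by blast
    then have "poly_in_var j p \<in> Jj n t u j" "lead_coeff p = 1"
      using poly_in_var_in_Jj[OF j] unfolding is_min_poly_def by auto
    moreover have "Jj n t u (j+1) \<subseteq> Jj n t u j" using J by blast
    ultimately have "std_monos {j..n} (Jj n t u j) \<subseteq> C"
      unfolding C_def std using std_monos_subset_Cset[of j n t u p B] j p(2) by simp
    then show ?thesis unfolding Bprime using lex_pivots_eq_std_monos[OF C] by blast
  qed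
  ultimately show ?thesis by blast
qed

end
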